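(* Let $d\ge1$ and let $P(k)$, $k\ge d+1$, be the asymptotic degree distribution of the $d$-dimensional P-RAN, given by $P(d+1)=\frac12$ and $P(k)=\frac{dk-d^2-d+1}{dk-d^2+d+2}P(k-1)$ for $k>d+1$. Then the P-RAN is scale free with degree exponent $\gamma=\frac{2d+1}{d}$, in the sense that $$\lim_{k\to\infty}\frac{\log P(k)-\log P(k-1)}{\log k-\log(k-1)}=-\frac{2d+1}{d},$$ so that $P(k)\sim k^{-\gamma}$ for large $k$.
   Context: P-RAN process in dimension $d$: start from a complete graph on $d+2$ vertices with the list of its $d+2$ $(d+1)$-cliques; at each step a clique is chosen uniformly at random from the list, a new vertex is joined to its $d+1$ vertices, the chosen clique stays in the list and the $d+1$ new $(d+1)$-cliques containing the new vertex are appended. $P(k)$ is the limit as $t\to\infty$ of the expected fraction of vertices having degree $k$. *)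

theory Defs
  imports "HOL-Analysis.Analysis"
begin

text \<open>Asymptotic degree distribution of the d-dimensional P-RAN, defined by the
recurrence P(d+1) = 1/2 and
P(k) = (d k - d^2 - d + 1)/(d k - d^2 + d + 2) * P(k-1) for k > d+1.
PRAN_aux d n is P(d+1+n).\<close>

fun PRAN_aux :: "nat \<Rightarrow> nat \<Rightarrow> real" where
  "PRAN_aux d 0 = 1/2"
| "PRAN_aux d (Suc n) =
     (let k = real (d + 2 + n); r = real d in
       (r*k - r^2 - r + 1) / (r*k - r^2 + r + 2)) * PRAN_aux d n"

text \<open>P(k) for k \<ge> d+1 (values for k \<le> d are not used).\<close>
definition PRAN :: "nat \<Rightarrow> nat \<Rightarrow> real" where
  "PRAN d k = PRAN_aux d (k - (d + 1))"

end

theory Submission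
  imports Defs "HOL-Real_Asymp.Real_Asymp"
begin

text \<open>Each recurrence factor has the form \<open>1 - (2d+1)/(d k + b)\<close>, so
  \<open>log P(k) - log P(k-1) \<sim> -(2d+1)/(d k)\<close>, while \<open>log k - log (k-1) \<sim> 1/k\<close>;
  the quotient tends to \<open>-(2d+1)/d\<close>.\<close>

lemma PRAN_aux_pos: "PRAN_aux d n > 0"
proof (induction n)
  case 0
  then show ?case by simp
next
  case (Suc n)
  have "real d * real (d + 2 + n) - (real d)^2 - real d + 1 > 0"
       "real d * real (d + 2 + n) - (real d)^2 + real d + 2 > 0"
    by (simp_all add: algebra_simps power2_eq_square add_pos_nonneg)
  with Suc show ?case by (simp add: Let_def)
qed

lemma PRAN_pos: "PRAN d k > 0"
  unfolding PRAN_def by (rule PRAN_aux_pos)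

lemma PRAN_ratio:
  assumes "k \<ge> d + 2"
  shows "PRAN d k = (1 - (2 * real d + 1) / (real d * real k + (real d + 2 - (real d)^2)))
                    * PRAN d (k - 1)"
proof -
  obtain n where n: "k = d + 2 + n"
    using assms le_Suc_ex by blast
  have "real d * real (d + 2 + n) - (real d)^2 + real d + 2 > 0"
    by (simp add: algebra_simps power2_eq_square add_pos_nonneg)
  then have "(real d * real (d + 2 + n) - (real d)^2 - real d + 1)
               / (real d * real (d + 2 + n) - (real d)^2 + real d + 2)
           = 1 - (2 * real d + 1) / (real d * real k + (real d + 2 - (real d)^2))"
    using n by (simp add: field_simps)
  moreover have "k - (d + 1) = Suc n" "k - 1 - (d + 1) = n"
    using n by simp_all
  ultimately show ?thesis
    unfolding PRAN_def by (simp add: Let_def)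
qed

lemma ln_ratio_over_ln_ratio_tendsto:
  fixes r b :: real
  assumes "r > 0"
  shows "((\<lambda>x. ln (1 - (2 * r + 1) / (r * x + b)) / (ln x - ln (x - 1)))
           \<longlongrightarrow> - (2 * r + 1) / r) at_top"
  using assms by (real_asymp simp: field_simps)

theorem mainTheorem4:
  fixes d :: nat
  assumes "d \<ge> 1"
  shows "(\<lambda>k. (ln (PRAN d k) - ln (PRAN d (k - 1))) / (ln (real k) - ln (real k - 1)))
           \<longlonglongrightarrow> - (2 * real d + 1) / real d"
proof -
  define q where "q x = 1 - (2 * real d + 1) / (real d * x + (real d + 2 - (real d)^2))" for x
  have "((\<lambda>x. ln (q x) / (ln x - ln (x - 1))) \<longlongrightarrow> - (2 * real d + 1) / real d) at_top"
    unfolding q_def using assms by (intro ln_ratio_over_ln_ratio_tendsto) simp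
  then have "(\<lambda>k. ln (q (real k)) / (ln (real k) - ln (real k - 1)))
               \<longlonglongrightarrow> - (2 * real d + 1) / real d"
    using filterlim_compose filterlim_real_sequentially by (fastforce simp: o_def)
  moreover have "\<forall>\<^sub>F k in sequentially. ln (q (real k)) = ln (PRAN d k) - ln (PRAN d (k - 1))"
  proof (rule eventually_sequentiallyI[of "d + 2"])
    fix k assume "d + 2 \<le> k"
    then have ratio: "PRAN d k = q (real k) * PRAN d (k - 1)"
      unfolding q_def by (rule PRAN_ratio)
    then have "q (real k) > 0"
      using PRAN_pos[of d k] PRAN_pos[of d "k - 1"] by (simp add: zero_less_mult_iff)
    with ratio show "ln (q (real k)) = ln (PRAN d k) - ln (PRAN d (k - 1))"
      using PRAN_pos[of d "k - 1"] by (simp add: ln_mult_pos)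
  qed
  ultimately show ?thesis
    by (rule Lim_transform_eventually[OF _ eventually_mono]) simp
qed

end
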